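(* Let $n\ge 1$ be an integer and let $\mathbb{F}_q$ be a finite field with $q$ elements. Let $B\subset\mathbb{F}_q^n$ be a Nikodym set, i.e. for every $x\in\mathbb{F}_q^n\setminus B$ there exists a line $L\subset\mathbb{F}_q^n$ such that $L\cap(\mathbb{F}_q^n\setminus B)=\{x\}$. Then \[|B|\ge \binom{n+q-2}{n}.\]
   Context: A line in $\mathbb{F}_q^n$ is a set of the form $\{a+tb: t\in\mathbb{F}_q\}$ with $a,b\in\mathbb{F}_q^n$, $b\neq 0$. *)

theory Defs
  imports "HOL-Analysis.Analysis"
begin

definition line_of :: "'a::field ^ 'n \<Rightarrow> 'a ^ 'n \<Rightarrow> ('a ^ 'n) set" where
  "line_of a b = {a + t *s b | t. True}"

definition is_line :: "('a::field ^ 'n) set \<Rightarrow> bool" where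
  "is_line L \<longleftrightarrow> (\<exists>a b. b \<noteq> 0 \<and> L = line_of a b)"

definition nikodym_set :: "('a::field ^ 'n) set \<Rightarrow> bool" where
  "nikodym_set B \<longleftrightarrow> (\<forall>x. x \<notin> B \<longrightarrow> (\<exists>L. is_line L \<and> L \<inter> (UNIV - B) = {x}))"

end

theory Submission imports Defs "HOL-Computational_Algebra.Polynomial" begin

text \<open>
  Suppose \<open>|B| < C(n+q-2, n)\<close>, the number of monomials of total degree at most \<open>q - 2\<close>.
  Then some nonzero polynomial \<open>f\<close> of degree at most \<open>q - 2\<close> vanishes on \<open>B\<close>. For
  \<open>x \<notin> B\<close>, the line through \<open>x\<close> given by the Nikodym property lies in \<open>B\<close> except
  for \<open>x\<close>, so \<open>f\<close> restricted to it is a univariate polynomial of degree at most \<open>q - 2\<close>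
  with \<open>q - 1\<close> roots; hence it vanishes identically and \<open>f x = 0\<close>. So \<open>f\<close> vanishes on
  all of \<open>F\<^sub>q\<^sup>n\<close>, which is impossible for a nonzero polynomial whose degree in each
  variable is below \<open>q\<close>.
\<close>

lemma card_field_ge_2: "CARD('a::{field,finite}) \<ge> 2"
proof -
  have "card {0::'a, 1} = 2" by simp
  moreover have "card {0::'a, 1} \<le> CARD('a)" by (rule card_mono) auto
  ultimately show ?thesis by simp
qed

lemma poly_eq_0_if_card_roots_gt_degree:
  fixes p :: "'a::{comm_ring_1,ring_no_zero_divisors} poly"
  assumes "degree p < card {x. poly p x = 0}"
  shows "p = 0"
  using assms card_poly_roots_bound[of p] by (cases "p = 0") auto

lemma vanishing_low_degree_coeffs_eq_0:
  fixes a :: "nat \<Rightarrow> 'a::{field,finite}"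
  assumes "\<And>t. (\<Sum>k<CARD('a). a k * t ^ k) = 0" and "k < CARD('a)"
  shows "a k = 0"
proof -
  define p where "p = (\<Sum>k<CARD('a). monom (a k) k)"
  have "degree p \<le> CARD('a) - 1"
    unfolding p_def by (rule degree_sum_le) (auto intro: order.trans[OF degree_monom_le])
  then have "degree p < CARD('a)" by (simp add: less_eq_iff_succ_less)
  moreover have "{x. poly p x = 0} = UNIV"
    using assms(1) by (simp add: p_def poly_sum poly_monom)
  ultimately have "p = 0" by (intro poly_eq_0_if_card_roots_gt_degree) simp
  moreover have "coeff p k = a k" using assms(2) by (simp add: p_def coeff_sum)
  ultimately show ?thesis by simp
qed

definition monomial_eval :: "('n \<Rightarrow> nat) \<Rightarrow> 'a::comm_ring_1 ^ 'n \<Rightarrow> 'a" where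
  "monomial_eval e x = (\<Prod>i\<in>UNIV. x $ i ^ e i)"

lemma monomial_eval_fun_upd:
  fixes x :: "'a::comm_ring_1 ^ 'n::finite"
  assumes "e j = 0"
  shows "monomial_eval (e(j := k)) x = x $ j ^ k * monomial_eval e x"
proof -
  have "(\<Prod>i\<in>UNIV - {j}. x $ i ^ (e(j := k)) i) = (\<Prod>i\<in>UNIV - {j}. x $ i ^ e i)"
    by (rule prod.cong) auto
  then show ?thesis
    using assms unfolding monomial_eval_def by (simp add: prod.remove[of _ j])
qed

lemma monomial_eval_cong:
  assumes "e j = 0" and "\<And>i. i \<noteq> j \<Longrightarrow> y $ i = x $ i"
  shows "monomial_eval e y = monomial_eval e x"
  unfolding monomial_eval_def using assms by (intro prod.cong) (auto, metis power_0)

definition reduced_exponents :: "nat \<Rightarrow> 'n set \<Rightarrow> ('n \<Rightarrow> nat) set" where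
  "reduced_exponents q S = {e. (\<forall>i. e i < q) \<and> (\<forall>i. i \<notin> S \<longrightarrow> e i = 0)}"

definition exponents_deg_le :: "nat \<Rightarrow> 'n set \<Rightarrow> ('n \<Rightarrow> nat) set" where
  "exponents_deg_le d S = {e. (\<forall>i. i \<notin> S \<longrightarrow> e i = 0) \<and> sum e S \<le> d}"

lemma finite_reduced_exponents: "finite (reduced_exponents q (S :: 'n::finite set))"
proof (rule finite_subset)
  show "reduced_exponents q S \<subseteq> PiE UNIV (\<lambda>_. {..<q})"
    unfolding reduced_exponents_def by auto
qed (intro finite_PiE, auto)

lemma reduced_exponents_mono: "q \<le> q' \<Longrightarrow> reduced_exponents q S \<subseteq> reduced_exponents q' S"
  unfolding reduced_exponents_def using order_less_le_trans by blast

lemma exponents_deg_le_subset_reduced_exponents: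
  assumes "finite S"
  shows "exponents_deg_le d S \<subseteq> reduced_exponents (Suc d) S"
proof
  fix e assume e: "e \<in> exponents_deg_le d S"
  have "e i < Suc d" for i
  proof (cases "i \<in> S")
    case True
    then have "e i \<le> sum e S" using assms by (intro member_le_sum) auto
    then show ?thesis using e unfolding exponents_deg_le_def by auto
  next
    case False
    then show ?thesis using e unfolding exponents_deg_le_def by simp
  qed
  then show "e \<in> reduced_exponents (Suc d) S"
    using e unfolding exponents_deg_le_def reduced_exponents_def by auto
qed

lemma finite_exponents_deg_le: "finite (exponents_deg_le d (S :: 'n::finite set))"
  by (rule finite_subset[OF exponents_deg_le_subset_reduced_exponents[OF finite]
        finite_reduced_exponents])

lemma inj_on_fun_upd_pairs:
  assumes "\<And>k e. (k, e) \<in> A \<Longrightarrow> e j = 0"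
  shows "inj_on (\<lambda>(k, e). e(j := k)) A"
proof (rule inj_onI, clarsimp)
  fix k e k' e'
  assume "(k, e) \<in> A" "(k', e') \<in> A" and eq: "e(j := k) = e'(j := k')"
  then have "e j = 0" "e' j = 0" using assms by auto
  moreover have "e i = e' i" if "i \<noteq> j" for i using fun_cong[OF eq, of i] that by simp
  ultimately have "e = e'" by (metis ext)
  then show "k = k' \<and> e = e'" using fun_cong[OF eq, of j] by simp
qed

lemma reduced_exponents_insert: "reduced_exponents q (insert j S) =
      (\<lambda>(k, e). e(j := k)) ` ({..<q} \<times> reduced_exponents q S)"
proof (intro equalityI subsetI)
  fix f assume "f \<in> reduced_exponents q (insert j S)"
  then have "(f j, f(j := 0)) \<in> {..<q} \<times> reduced_exponents q S"
    unfolding reduced_exponents_def by auto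
  then show "f \<in> (\<lambda>(k, e). e(j := k)) ` ({..<q} \<times> reduced_exponents q S)"
    by (rule rev_image_eqI) simp
next
  fix f assume "f \<in> (\<lambda>(k, e). e(j := k)) ` ({..<q} \<times> reduced_exponents q S)"
  then obtain k e where "f = e(j := k)" "k < q" "e \<in> reduced_exponents q S" by auto
  then show "f \<in> reduced_exponents q (insert j S)" unfolding reduced_exponents_def by auto
qed

lemma exponents_deg_le_insert:
  assumes "finite S" and "j \<notin> S"
  shows "exponents_deg_le d (insert j S) =
    (\<lambda>(k, e). e(j := k)) ` (SIGMA k:{..d}. exponents_deg_le (d - k) S)"
proof -
  have sum_upd: "sum (e(j := k)) (insert j S) = k + sum e S" for e k
  proof -
    have "sum (e(j := k)) S = sum e S" using assms(2) by (intro sum.cong) auto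
    then show ?thesis using assms by simp
  qed
  show ?thesis
  proof (intro equalityI subsetI)
    fix f assume f: "f \<in> exponents_deg_le d (insert j S)"
    then have "(f j, f(j := 0)) \<in> (SIGMA k:{..d}. exponents_deg_le (d - k) S)"
      using sum_upd[of "f(j := 0)" "f j"] unfolding exponents_deg_le_def by auto
    then show "f \<in> (\<lambda>(k, e). e(j := k)) ` (SIGMA k:{..d}. exponents_deg_le (d - k) S)"
      by (rule rev_image_eqI) simp
  next
    fix f assume "f \<in> (\<lambda>(k, e). e(j := k)) ` (SIGMA k:{..d}. exponents_deg_le (d - k) S)"
    then obtain k e where "f = e(j := k)" "k \<le> d" "e \<in> exponents_deg_le (d - k) S" by auto
    then show "f \<in> exponents_deg_le d (insert j S)"
      using sum_upd[of e k] unfolding exponents_deg_le_def by auto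
  qed
qed

lemma sum_choose_reversed: "(\<Sum>k\<le>d. (m + (d - k)) choose m) = (Suc m + d) choose Suc m"
proof -
  have "(\<Sum>k\<le>d. (m + (d - k)) choose m) = (\<Sum>k\<le>d. (m + k) choose m)"
    by (rule sum.reindex_bij_witness[of _ "\<lambda>k. d - k" "\<lambda>k. d - k"]) auto
  also have "\<dots> = (\<Sum>k\<le>d. (m + k) choose k)"
    by (intro sum.cong refl) (metis add_diff_cancel_left' binomial_symmetric le_add1 add.commute)
  also have "\<dots> = Suc (m + d) choose d" by (rule sum_choose_lower)
  also have "\<dots> = (Suc m + d) choose Suc m"
    by (metis add_Suc add_diff_cancel_right' binomial_symmetric le_add2)
  finally show ?thesis .
qed

lemma card_exponents_deg_le:
  fixes S :: "'n::finite set"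
  shows "card (exponents_deg_le d S) = (card S + d) choose card S"
  using finite[of S]
proof (induction S arbitrary: d rule: finite_induct)
  case empty
  have empty_set: "exponents_deg_le d {} = {\<lambda>_. 0}" unfolding exponents_deg_le_def by auto
  show ?case unfolding empty_set by simp
next
  case (insert j S)
  have "inj_on (\<lambda>(k, e). e(j := k)) (SIGMA k:{..d}. exponents_deg_le (d - k) S)"
    using insert(2) by (intro inj_on_fun_upd_pairs) (auto simp: exponents_deg_le_def)
  then have "card (exponents_deg_le d (insert j S)) = (\<Sum>k\<le>d. card (exponents_deg_le (d - k) S))"
    by (simp add: exponents_deg_le_insert[OF insert(1,2)] card_image finite_exponents_deg_le)
  also have "\<dots> = (\<Sum>k\<le>d. (card S + (d - k)) choose card S)" using insert(3) by simp
  also have "\<dots> = (Suc (card S) + d) choose Suc (card S)" by (rule sum_choose_reversed)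
  finally show ?case using insert(1,2) by simp
qed

lemma sum_reduced_exponents_insert:
  fixes x :: "'a::comm_ring_1 ^ 'n::finite"
  assumes "j \<notin> S"
  shows "(\<Sum>e\<in>reduced_exponents q (insert j S). c e * monomial_eval e x)
    = (\<Sum>k<q. (\<Sum>e\<in>reduced_exponents q S. c (e(j := k)) * monomial_eval e x) * x $ j ^ k)"
proof -
  have j0: "e j = 0" if "e \<in> reduced_exponents q S" for e
    using that assms by (auto simp: reduced_exponents_def)
  then have inj: "inj_on (\<lambda>(k, e). e(j := k)) ({..<q} \<times> reduced_exponents q S)"
    by (intro inj_on_fun_upd_pairs) auto
  have "(\<Sum>e\<in>reduced_exponents q (insert j S). c e * monomial_eval e x)
      = (\<Sum>(k, e)\<in>{..<q} \<times> reduced_exponents q S. c (e(j := k)) * monomial_eval (e(j := k)) x)"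
    unfolding reduced_exponents_insert
    by (subst sum.reindex[OF inj]) (simp add: case_prod_beta)
  also have "\<dots> = (\<Sum>k<q. (\<Sum>e\<in>reduced_exponents q S. c (e(j := k)) * monomial_eval e x) * x $ j ^ k)"
    unfolding sum_distrib_right sum.cartesian_product[symmetric]
    by (intro sum.cong refl) (simp add: monomial_eval_fun_upd j0 mult_ac)
  finally show ?thesis .
qed

lemma reduced_polynomial_coeffs_eq_0:
  fixes c :: "('n::finite \<Rightarrow> nat) \<Rightarrow> 'a::{field,finite}"
  assumes "\<And>x. (\<Sum>e\<in>reduced_exponents CARD('a) S. c e * monomial_eval e x) = 0"
    and "e \<in> reduced_exponents CARD('a) S"
  shows "c e = 0"
  using finite[of S] assms
proof (induction S arbitrary: c e rule: finite_induct)
  case empty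
  have empty_set: "reduced_exponents CARD('a) {} = {\<lambda>_. 0}" unfolding reduced_exponents_def by auto
  show ?case using empty(1)[of 0] empty(2) unfolding empty_set by (simp add: monomial_eval_def)
next
  case (insert j S)
  define q where "q = CARD('a)"
  let ?R = "reduced_exponents q S"
  have j0: "e' j = 0" if "e' \<in> ?R" for e' using that insert(2) by (auto simp: reduced_exponents_def)
  define G where "G k x = (\<Sum>e'\<in>?R. c (e'(j := k)) * monomial_eval e' x)" for k x
  have expand: "(\<Sum>e\<in>reduced_exponents q (insert j S). c e * monomial_eval e x)
      = (\<Sum>k<q. G k x * x $ j ^ k)" for x
    unfolding G_def by (rule sum_reduced_exponents_insert[OF insert(2)])
  \<comment> \<open>Freezing all variables but \<open>x $ j\<close> leaves a univariate polynomial of degree below \<open>q\<close>.\<close>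
  have G_eq_0: "G k x = 0" if "k < q" for k x
  proof (rule vanishing_low_degree_coeffs_eq_0[where a = "\<lambda>k. G k x"])
    fix t :: 'a
    define y where "y = (\<chi> i. if i = j then t else x $ i)"
    have "G k y = G k x" for k unfolding G_def
      by (intro sum.cong refl arg_cong2[where f = "(*)"] monomial_eval_cong) (auto simp: y_def j0)
    then show "(\<Sum>k<CARD('a). G k x * t ^ k) = 0"
      using insert(4)[of y] expand[of y] by (simp add: q_def y_def)
  qed (use that q_def in simp)
  have "c (e'(j := k)) = 0" if "k < q" "e' \<in> ?R" for k e'
    using insert(3)[of "\<lambda>e'. c (e'(j := k))"] G_eq_0[OF that(1)] that(2)
    unfolding G_def q_def by blast
  moreover have "e = (e(j := 0))(j := e j)" "e(j := 0) \<in> ?R" "e j < q"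
    using insert(5) by (auto simp: q_def reduced_exponents_def)
  ultimately show ?case by metis
qed

definition mpoly_eval :: "nat \<Rightarrow> (('n \<Rightarrow> nat) \<Rightarrow> 'a) \<Rightarrow> 'a::comm_ring_1 ^ 'n \<Rightarrow> 'a" where
  "mpoly_eval d c x = (\<Sum>e\<in>exponents_deg_le d UNIV. c e * monomial_eval e x)"

lemma mpoly_eval_on_line:
  fixes a b :: "'a::field ^ 'n::finite"
  obtains P where "degree P \<le> d" and "\<And>t. poly P t = mpoly_eval d c (a + t *s b)"
proof
  let ?M = "exponents_deg_le d (UNIV :: 'n set)"
  define P where "P = (\<Sum>e\<in>?M. smult (c e) (\<Prod>i\<in>UNIV. [:a $ i, b $ i:] ^ e i))"
  show "poly P t = mpoly_eval d c (a + t *s b)" for t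
    unfolding P_def mpoly_eval_def monomial_eval_def by (simp add: poly_sum poly_prod mult_ac)
  have "degree (\<Prod>i\<in>UNIV. [:a $ i, b $ i:] ^ e i) \<le> d" if "e \<in> ?M" for e
  proof -
    have "degree (\<Prod>i\<in>UNIV. [:a $ i, b $ i:] ^ e i) \<le> (\<Sum>i\<in>UNIV. degree ([:a $ i, b $ i:] ^ e i))"
      using degree_prod_sum_le[of UNIV "\<lambda>i. [:a $ i, b $ i:] ^ e i"] by (simp add: o_def)
    also have "\<dots> \<le> (\<Sum>i\<in>UNIV. e i)"
      by (intro sum_mono order.trans[OF degree_power_le]) simp
    also have "\<dots> \<le> d" using that unfolding exponents_deg_le_def by auto
    finally show ?thesis .
  qed
  then show "degree P \<le> d"
    unfolding P_def by (intro degree_sum_le finite_exponents_deg_le order.trans[OF degree_smult_le])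
qed

lemma mpoly_eval_eq_0_imp_coeffs_eq_0:
  fixes c :: "('n::finite \<Rightarrow> nat) \<Rightarrow> 'a::{field,finite}"
  assumes "d < CARD('a)" and "\<And>x. mpoly_eval d c x = 0" and "e \<in> exponents_deg_le d UNIV"
  shows "c e = 0"
proof -
  let ?M = "exponents_deg_le d (UNIV :: 'n set)"
  define c' where "c' e = (if e \<in> ?M then c e else 0)" for e
  have M_sub: "?M \<subseteq> reduced_exponents CARD('a) UNIV"
    using exponents_deg_le_subset_reduced_exponents[OF finite, of d] reduced_exponents_mono[of "Suc d"]
      assms(1) by (meson Suc_leI order.trans)
  have extend: "(\<Sum>e\<in>reduced_exponents CARD('a) UNIV. c' e * monomial_eval e x) = mpoly_eval d c x"
    for x
  proof -
    have "(\<Sum>e\<in>reduced_exponents CARD('a) UNIV. c' e * monomial_eval e x)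
        = (\<Sum>e\<in>?M. c' e * monomial_eval e x)"
      by (rule sum.mono_neutral_right[OF finite_reduced_exponents M_sub]) (simp add: c'_def)
    also have "\<dots> = mpoly_eval d c x"
      unfolding mpoly_eval_def by (rule sum.cong) (simp_all add: c'_def)
    finally show ?thesis .
  qed
  have "c' e = 0"
  proof (rule reduced_polynomial_coeffs_eq_0)
    show "(\<Sum>e\<in>reduced_exponents CARD('a) UNIV. c' e * monomial_eval e x) = 0" for x
      using extend assms(2) by simp
    show "e \<in> reduced_exponents CARD('a) UNIV" using assms(3) M_sub by blast
  qed
  then show ?thesis using assms(3) by (simp add: c'_def)
qed

lemma line_param_inj:
  fixes b :: "'a::field ^ 'n"
  assumes "a + t *s b = a + u *s b" and "b \<noteq> 0"
  shows "t = u"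
proof -
  obtain i where "b $ i \<noteq> 0" using assms(2) by (metis vec_eq_iff zero_index)
  moreover have "t * b $ i = u * b $ i" using arg_cong[OF assms(1), of "\<lambda>v. v $ i"] by simp
  ultimately show ?thesis by simp
qed

lemma mpoly_eval_vanishing_on_nikodym_set:
  fixes B :: "('a::{field,finite} ^ 'n::finite) set"
  assumes "nikodym_set B" and vanish: "\<And>y. y \<in> B \<Longrightarrow> mpoly_eval (CARD('a) - 2) c y = 0"
  shows "mpoly_eval (CARD('a) - 2) c x = 0"
proof (cases "x \<in> B")
  case False
  then obtain L where L: "is_line L" "L \<inter> (UNIV - B) = {x}"
    using assms(1) unfolding nikodym_set_def by blast
  then obtain a b where ab: "b \<noteq> 0" "L = line_of a b" unfolding is_line_def by blast
  then obtain t0 where t0: "x = a + t0 *s b" using L(2) unfolding line_of_def by blast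
  obtain P where P: "degree P \<le> CARD('a) - 2" "\<And>t. poly P t = mpoly_eval (CARD('a) - 2) c (a + t *s b)"
    using mpoly_eval_on_line by blast
  have "a + t *s b \<in> B" if "t \<noteq> t0" for t
  proof (rule ccontr)
    assume "a + t *s b \<notin> B"
    moreover have "a + t *s b \<in> L" using ab(2) unfolding line_of_def by blast
    ultimately have "a + t *s b = a + t0 *s b" using L(2) t0 by blast
    then show False using line_param_inj ab(1) that by blast
  qed
  then have "UNIV - {t0} \<subseteq> {t. poly P t = 0}" using P(2) vanish by auto
  then have "CARD('a) - 1 \<le> card {t. poly P t = 0}"
    using card_mono[of "{t. poly P t = 0}" "UNIV - {t0}"] by (simp add: card_Diff_singleton)
  then have "P = 0"
    using P(1) card_field_ge_2[where 'a = 'a] by (intro poly_eq_0_if_card_roots_gt_degree) linarith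
  then show ?thesis using P(2)[of t0] t0 by simp
qed (use vanish in simp)

lemma exists_nontrivial_combination_vanishing_on:
  fixes f :: "'m \<Rightarrow> 'x \<Rightarrow> 'a::{field,finite}"
  assumes "finite M" and "finite X" and "card X < card M"
  obtains c where "\<exists>e\<in>M. c e \<noteq> 0" and "\<And>x. x \<in> X \<Longrightarrow> (\<Sum>e\<in>M. c e * f e x) = 0"
proof -
  define eval where "eval c = restrict (\<lambda>x. \<Sum>e\<in>M. c e * f e x) X" for c
  have "CARD('a) ^ card X < CARD('a) ^ card M"
    using card_field_ge_2[where 'a = 'a] assms(3) by (intro power_strict_increasing) auto
  then have "\<not> card (M \<rightarrow>\<^sub>E (UNIV :: 'a set)) \<le> card (X \<rightarrow>\<^sub>E (UNIV :: 'a set))"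
    using assms(1,2) by (simp add: card_PiE)
  moreover have "eval ` (M \<rightarrow>\<^sub>E UNIV) \<subseteq> X \<rightarrow>\<^sub>E UNIV" unfolding eval_def by auto
  ultimately have "\<not> inj_on eval (M \<rightarrow>\<^sub>E UNIV)"
    using card_inj_on_le[of eval "M \<rightarrow>\<^sub>E UNIV" "X \<rightarrow>\<^sub>E UNIV"] assms(2) by (auto simp: finite_PiE)
  then obtain c1 c2 where c12: "c1 \<in> M \<rightarrow>\<^sub>E UNIV" "c2 \<in> M \<rightarrow>\<^sub>E UNIV" "c1 \<noteq> c2" "eval c1 = eval c2"
    unfolding inj_on_def by blast
  show ?thesis
  proof
    show "\<exists>e\<in>M. c1 e - c2 e \<noteq> 0"
      using c12(1-3) by (metis PiE_ext eq_iff_diff_eq_0)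
    show "(\<Sum>e\<in>M. (c1 e - c2 e) * f e x) = 0" if "x \<in> X" for x
      using fun_cong[OF c12(4), of x] that
      by (simp add: eval_def left_diff_distrib sum_subtractf)
  qed
qed

theorem mainTheorem1:
  fixes B :: "('a::{field,finite} ^ 'n) set"
  assumes "nikodym_set B"
  shows "real (card B) \<ge> real ((CARD('n) + CARD('a) - 2) choose CARD('n))"
proof -
  define d where "d = CARD('a) - 2"
  let ?M = "exponents_deg_le d (UNIV :: 'n set)"
  have card_M: "card ?M = (CARD('n) + CARD('a) - 2) choose CARD('n)"
    using card_field_ge_2[where 'a = 'a] by (simp add: card_exponents_deg_le d_def add.commute)
  have "card ?M \<le> card B"
  proof (rule ccontr)
    assume "\<not> card ?M \<le> card B"
    then have "card B < card ?M" by simp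
    then obtain c where c: "\<exists>e\<in>?M. c e \<noteq> 0"
      and vanish: "\<And>x. x \<in> B \<Longrightarrow> (\<Sum>e\<in>?M. c e * monomial_eval e x) = 0"
      using exists_nontrivial_combination_vanishing_on[OF finite_exponents_deg_le finite] by blast
    have "mpoly_eval d c x = 0" for x
      unfolding d_def
    proof (rule mpoly_eval_vanishing_on_nikodym_set[OF assms])
      show "mpoly_eval (CARD('a) - 2) c y = 0" if "y \<in> B" for y
        using vanish[OF that] by (simp add: mpoly_eval_def d_def)
    qed
    moreover have "d < CARD('a)" using card_field_ge_2[where 'a = 'a] by (simp add: d_def)
    ultimately show False using c mpoly_eval_eq_0_imp_coeffs_eq_0 by blast
  qed
  then show ?thesis using card_M by simp
qed

end
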